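(* For every positive integer $n$ and every real $x$, \begin{align*} \sum_{k=1}^n\frac{((4x-27)k^2+(2x+27)k-2x-6)x^k}{(2k-1)\binom{3k}k}&=-2x+2(n+1)\frac{x^{n+1}}{\binom{3n}n},\\ \sum_{k=1}^n\frac{((4x-27)k^2+(27-2x)k-6)x^k}{k(2k-1)\binom{3k}k}&=-2x+\frac{2x^{n+1}}{\binom{3n}n},\\ \sum_{k=1}^n\frac{(2(x-16)k^2+(x+32)k-x-6)x^k}{(2k-1)\binom{4k}{2k}}&=-x+(n+1)\frac{x^{n+1}}{\binom{4n}{2n}},\\ \sum_{k=1}^n\frac{(2(x-16)k^2+(32-x)k-6)x^k}{k(2k-1)\binom{4k}{2k}}&=-x+\frac{x^{n+1}}{\binom{4n}{2n}},\\ \sum_{k=1}^n\frac{((4x-27)k^2+(6x+27)k+2x-6)x^k}{\binom{3k}k}&=-2x+\frac{2(n+1)(2n+1)x^{n+1}}{\binom{3n}n},\\ \sum_{k=1}^n\frac{(2(x-16)k^2+(3x+32)k+x-6)x^k}{\binom{4k}{2k}}&=-x+\frac{(n+1)(2n+1)x^{n+1}}{\binom{4n}{2n}}. \end{align*} *)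

theory Defs
  imports Complex_Main
begin

end

theory Submission
  imports Defs
begin

(* Each sum telescopes. Let b k be the binomial coefficient in the denominator. The ratio
   b (k+1) / b k is rational in k, namely 3(3k+2)(3k+1) / (2(k+1)(2k+1)) for (3k choose k) and
   4(4k+3)(4k+1) / ((2k+2)(2k+1)) for (4k choose 2k). So for G k = c k x^(k+1) / b k, with c a
   polynomial in k of degree at most 2, the difference G k - G (k-1) is a rational function of k
   times x^k / b k, and for the right c it is exactly the k-th summand. *)

lemma binomial_absorb_comp_Suc:
  "(n + k + 1 choose k) * (n + 1) = (n + k + 1) * (n + k choose k)"
  using binomial_absorb_comp[of "n + k + 1" k] by (simp add: mult.commute)

lemma binomial_triple_Suc:
  "(3 * Suc m choose Suc m) * (2 * (m + 1) * (2 * m + 1))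
    = (3 * m choose m) * (3 * (3 * m + 2) * (3 * m + 1))"
proof -
  have to_3m1: "(3*m + 1 choose m + 1) * (m + 1) = (3*m + 1) * (3*m choose m)"
    using Suc_times_binomial_eq[of "3*m" m] by (simp del: binomial_Suc_Suc)
  have to_3m2: "(3*m + 2 choose m + 1) * (2*m + 1) = (3*m + 2) * (3*m + 1 choose m + 1)"
    using binomial_absorb_comp_Suc[of "2*m" "m + 1"] by (simp del: binomial_Suc_Suc add: add.assoc)
  have to_3m3: "(3*m + 3 choose m + 1) * (2*m + 2) = (3*m + 3) * (3*m + 2 choose m + 1)"
  proof -
    have "2*m + 1 + (m + 1) + 1 = 3*m + 3" "2*m + 1 + (m + 1) = 3*m + 2" "2*m + 1 + 1 = 2*m + 2"
      by simp_all
    then show ?thesis using binomial_absorb_comp_Suc[of "2*m + 1" "m + 1"] by metis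
  qed
  have "(m + 1) * ((3 * Suc m choose Suc m) * (2 * (m + 1) * (2 * m + 1)))
      = (3*m + 3 choose m + 1) * (2*m + 2) * (2*m + 1) * (m + 1)"
    by (simp del: binomial_Suc_Suc add: algebra_simps)
  also have "\<dots> = (3*m + 3) * (3*m + 2) * (3*m + 1) * (3*m choose m)"
    by (simp only: to_3m1 to_3m2 to_3m3 mult.assoc)
  also have "\<dots> = (m + 1) * ((3 * m choose m) * (3 * (3 * m + 2) * (3 * m + 1)))"
    by (simp add: algebra_simps)
  finally show ?thesis by (subst (asm) mult_left_cancel) simp_all
qed

lemma binomial_quadruple_Suc:
  "(4 * Suc m choose (2 * Suc m)) * ((2 * m + 2) * (2 * m + 1))
    = (4 * m choose (2 * m)) * (4 * (4 * m + 3) * (4 * m + 1))"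
proof -
  have to_4m1: "(4*m + 1 choose 2*m + 1) * (2*m + 1) = (4*m + 1) * (4*m choose 2*m)"
    using Suc_times_binomial_eq[of "4*m" "2*m"] by (simp del: binomial_Suc_Suc)
  have to_4m2: "(4*m + 2 choose 2*m + 2) * (2*m + 2) = (4*m + 2) * (4*m + 1 choose 2*m + 1)"
    using Suc_times_binomial_eq[of "4*m + 1" "2*m + 1"] by (simp del: binomial_Suc_Suc)
  have to_4m3: "(4*m + 3 choose 2*m + 2) * (2*m + 1) = (4*m + 3) * (4*m + 2 choose 2*m + 2)"
  proof -
    have "2*m + (2*m + 2) + 1 = 4*m + 3" "2*m + (2*m + 2) = 4*m + 2"
      by simp_all
    then show ?thesis using binomial_absorb_comp_Suc[of "2*m" "2*m + 2"] by metis
  qed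
  have to_4m4: "(4*m + 4 choose 2*m + 2) * (2*m + 2) = (4*m + 4) * (4*m + 3 choose 2*m + 2)"
  proof -
    have "2*m + 1 + (2*m + 2) + 1 = 4*m + 4" "2*m + 1 + (2*m + 2) = 4*m + 3" "2*m + 1 + 1 = 2*m + 2"
      by simp_all
    then show ?thesis using binomial_absorb_comp_Suc[of "2*m + 1" "2*m + 2"] by metis
  qed
  have "((2*m + 1) * (2*m + 2)) * ((4 * Suc m choose (2 * Suc m)) * ((2 * m + 2) * (2 * m + 1)))
      = (4*m + 4 choose 2*m + 2) * (2*m + 2) * (2*m + 1) * (2*m + 2) * (2*m + 1)"
    by (simp del: binomial_Suc_Suc add: algebra_simps)
  also have "\<dots> = (4*m + 4) * (4*m + 3) * (4*m + 2) * (4*m + 1) * (4*m choose 2*m)"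
    by (simp only: to_4m1 to_4m2 to_4m3 to_4m4 mult.assoc)
  also have "\<dots>
      = ((2*m + 1) * (2*m + 2)) * ((4 * m choose (2 * m)) * (4 * (4 * m + 3) * (4 * m + 1)))"
    by (simp add: algebra_simps)
  finally show ?thesis by (subst (asm) mult_left_cancel) simp_all
qed

lemma sum_telescope_hypergeometric:
  fixes b c p u v :: "nat \<Rightarrow> real" and x :: real
  assumes b_Suc: "\<And>m. b (Suc m) * v m = b m * u m"
    and b_nonzero: "\<And>m. b m \<noteq> 0" and v_nonzero: "\<And>m. v m \<noteq> 0"
    and p_Suc: "\<And>m. p (Suc m) * v m = c (Suc m) * x * v m - c m * u m"
  shows "(\<Sum>k=1..n. p k * x^k / b k) = c n * x^(n+1) / b n - c 0 * x / b 0"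
proof -
  define G where "G m = c m * x^(m+1) / b m" for m
  have summand: "p (Suc m) * x^Suc m / b (Suc m) = G (Suc m) - G m" for m
  proof -
    have nz: "b (Suc m) \<noteq> 0" "v m \<noteq> 0" "b m * u m \<noteq> 0"
      using b_nonzero v_nonzero b_Suc[of m] by (metis mult_eq_0_iff)+
    have G_Suc: "G (Suc m) = c (Suc m) * x * v m * x^Suc m / (b (Suc m) * v m)"
      using nz unfolding G_def by simp
    have G: "G m = c m * u m * x^Suc m / (b (Suc m) * v m)"
      using nz unfolding G_def b_Suc by simp
    have "p (Suc m) * x^Suc m / b (Suc m) = (p (Suc m) * v m) * x^Suc m / (b (Suc m) * v m)"
      using nz by simp
    also have "\<dots> = G (Suc m) - G m"
      unfolding p_Suc G_Suc G by (simp add: left_diff_distrib diff_divide_distrib)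
    finally show ?thesis .
  qed
  have "(\<Sum>k=1..n. p k * x^k / b k) = (\<Sum>m<n. G (Suc m) - G m)"
    by (simp only: One_nat_def sum.atLeast1_atMost_eq summand)
  also have "\<dots> = G n - G 0"
    by (rule sum_lessThan_telescope)
  finally show ?thesis
    by (simp add: G_def)
qed

lemma sum_telescope_binomial_3k:
  fixes c p :: "nat \<Rightarrow> real" and x :: real
  assumes "\<And>m. p (Suc m) * (2 * (real m + 1) * (2 * real m + 1))
    = c (Suc m) * x * (2 * (real m + 1) * (2 * real m + 1))
      - c m * (3 * (3 * real m + 2) * (3 * real m + 1))"
  shows "(\<Sum>k=1..n. p k * x^k / real (3*k choose k))
    = c n * x^(n+1) / real (3*n choose n) - c 0 * x"
proof -
  have "real (3 * Suc m choose Suc m) * (2 * (real m + 1) * (2 * real m + 1))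
      = real (3 * m choose m) * (3 * (3 * real m + 2) * (3 * real m + 1))" for m
    using arg_cong[OF binomial_triple_Suc[of m], of real]
    by (simp only: of_nat_mult of_nat_add of_nat_numeral of_nat_1)
  from sum_telescope_hypergeometric[where b = "\<lambda>k. real (3*k choose k)"
      and v = "\<lambda>m. 2 * (real m + 1) * (2 * real m + 1)"
      and u = "\<lambda>m. 3 * (3 * real m + 2) * (3 * real m + 1)",
      OF this _ _ assms] show ?thesis
    by (simp add: add_nonneg_eq_0_iff)
qed

lemma sum_telescope_binomial_4k:
  fixes c p :: "nat \<Rightarrow> real" and x :: real
  assumes "\<And>m. p (Suc m) * ((2 * real m + 2) * (2 * real m + 1))
    = c (Suc m) * x * ((2 * real m + 2) * (2 * real m + 1))
      - c m * (4 * (4 * real m + 3) * (4 * real m + 1))"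
  shows "(\<Sum>k=1..n. p k * x^k / real (4*k choose (2*k)))
    = c n * x^(n+1) / real (4*n choose (2*n)) - c 0 * x"
proof -
  have "real (4 * Suc m choose (2 * Suc m)) * ((2 * real m + 2) * (2 * real m + 1))
      = real (4 * m choose (2 * m)) * (4 * (4 * real m + 3) * (4 * real m + 1))" for m
    using arg_cong[OF binomial_quadruple_Suc[of m], of real]
    by (simp only: of_nat_mult of_nat_add of_nat_numeral of_nat_1)
  from sum_telescope_hypergeometric[where b = "\<lambda>k. real (4*k choose (2*k))"
      and v = "\<lambda>m. (2 * real m + 2) * (2 * real m + 1)"
      and u = "\<lambda>m. 4 * (4 * real m + 3) * (4 * real m + 1)",
      OF this _ _ assms] show ?thesis
    by (simp add: add_nonneg_eq_0_iff)
qed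

lemma sum_div_odd_mult_binomial_3k:
  "(\<Sum>k=1..n. ((4*x-27)*real k^2 + (2*x+27)*real k - 2*x - 6) * x^k
      / ((2*real k - 1) * real (3*k choose k)))
   = -2*x + 2*(real n + 1) * x^(n+1) / real (3*n choose n)"
proof -
  have "(\<Sum>k=1..n. ((4*x-27)*real k^2 + (2*x+27)*real k - 2*x - 6) * x^k
      / ((2*real k - 1) * real (3*k choose k)))
    = (\<Sum>k=1..n. (((4*x-27)*real k^2 + (2*x+27)*real k - 2*x - 6) / (2*real k - 1)) * x^k
      / real (3*k choose k))"
    by simp
  also have "\<dots> = 2*(real n + 1) * x^(n+1) / real (3*n choose n) - 2*(real 0 + 1) * x"
    by (rule sum_telescope_binomial_3k[where c = "\<lambda>m. 2*(real m + 1)"])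
      (simp add: field_simps add_nonneg_eq_0_iff, simp add: algebra_simps power2_eq_square)
  finally show ?thesis by simp
qed

lemma sum_div_mult_odd_mult_binomial_3k:
  "(\<Sum>k=1..n. ((4*x-27)*real k^2 + (27-2*x)*real k - 6) * x^k
      / (real k * (2*real k - 1) * real (3*k choose k)))
   = -2*x + 2 * x^(n+1) / real (3*n choose n)"
proof -
  have "(\<Sum>k=1..n. ((4*x-27)*real k^2 + (27-2*x)*real k - 6) * x^k
      / (real k * (2*real k - 1) * real (3*k choose k)))
    = (\<Sum>k=1..n. (((4*x-27)*real k^2 + (27-2*x)*real k - 6) / (real k * (2*real k - 1))) * x^k
      / real (3*k choose k))"
    by simp
  also have "\<dots> = 2 * x^(n+1) / real (3*n choose n) - 2 * x"
    by (rule sum_telescope_binomial_3k[where c = "\<lambda>_. 2"])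
      (simp add: field_simps add_nonneg_eq_0_iff, simp add: algebra_simps power2_eq_square)
  finally show ?thesis by simp
qed

lemma sum_div_odd_mult_binomial_4k:
  "(\<Sum>k=1..n. (2*(x-16)*real k^2 + (x+32)*real k - x - 6) * x^k
      / ((2*real k - 1) * real (4*k choose (2*k))))
   = -x + (real n + 1) * x^(n+1) / real (4*n choose (2*n))"
proof -
  have "(\<Sum>k=1..n. (2*(x-16)*real k^2 + (x+32)*real k - x - 6) * x^k
      / ((2*real k - 1) * real (4*k choose (2*k))))
    = (\<Sum>k=1..n. ((2*(x-16)*real k^2 + (x+32)*real k - x - 6) / (2*real k - 1)) * x^k
      / real (4*k choose (2*k)))"
    by simp
  also have "\<dots> = (real n + 1) * x^(n+1) / real (4*n choose (2*n)) - (real 0 + 1) * x"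
    by (rule sum_telescope_binomial_4k[where c = "\<lambda>m. real m + 1"])
      (simp add: field_simps add_nonneg_eq_0_iff, simp add: algebra_simps power2_eq_square)
  finally show ?thesis by simp
qed

lemma sum_div_mult_odd_mult_binomial_4k:
  "(\<Sum>k=1..n. (2*(x-16)*real k^2 + (32-x)*real k - 6) * x^k
      / (real k * (2*real k - 1) * real (4*k choose (2*k))))
   = -x + x^(n+1) / real (4*n choose (2*n))"
proof -
  have "(\<Sum>k=1..n. (2*(x-16)*real k^2 + (32-x)*real k - 6) * x^k
      / (real k * (2*real k - 1) * real (4*k choose (2*k))))
    = (\<Sum>k=1..n. ((2*(x-16)*real k^2 + (32-x)*real k - 6) / (real k * (2*real k - 1))) * x^k
      / real (4*k choose (2*k)))"
    by simp
  also have "\<dots> = 1 * x^(n+1) / real (4*n choose (2*n)) - 1 * x"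
    by (rule sum_telescope_binomial_4k[where c = "\<lambda>_. 1"])
      (simp add: field_simps add_nonneg_eq_0_iff, simp add: algebra_simps power2_eq_square)
  finally show ?thesis by simp
qed

lemma sum_div_binomial_3k:
  "(\<Sum>k=1..n. ((4*x-27)*real k^2 + (6*x+27)*real k + 2*x - 6) * x^k / real (3*k choose k))
   = -2*x + 2*(real n + 1)*(2*real n + 1) * x^(n+1) / real (3*n choose n)"
proof -
  have "(\<Sum>k=1..n. ((4*x-27)*real k^2 + (6*x+27)*real k + 2*x - 6) * x^k / real (3*k choose k))
    = 2*(real n + 1)*(2*real n + 1) * x^(n+1) / real (3*n choose n) - 2*(real 0 + 1)*(2*real 0 + 1) * x"
    by (rule sum_telescope_binomial_3k[where c = "\<lambda>m. 2*(real m + 1)*(2*real m + 1)"])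
      (simp add: algebra_simps power2_eq_square)
  then show ?thesis by simp
qed

lemma sum_div_binomial_4k:
  "(\<Sum>k=1..n. (2*(x-16)*real k^2 + (3*x+32)*real k + x - 6) * x^k / real (4*k choose (2*k)))
   = -x + (real n + 1)*(2*real n + 1) * x^(n+1) / real (4*n choose (2*n))"
proof -
  have "(\<Sum>k=1..n. (2*(x-16)*real k^2 + (3*x+32)*real k + x - 6) * x^k / real (4*k choose (2*k)))
    = (real n + 1)*(2*real n + 1) * x^(n+1) / real (4*n choose (2*n)) - (real 0 + 1)*(2*real 0 + 1) * x"
    by (rule sum_telescope_binomial_4k[where c = "\<lambda>m. (real m + 1)*(2*real m + 1)"])
      (simp add: algebra_simps power2_eq_square)
  then show ?thesis by simp
qed

theorem lemma6p1:
  fixes n :: nat and x :: real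
  assumes "n \<ge> 1"
  shows "((\<Sum>k=1..n. ((4*x-27)*real k^2 + (2*x+27)*real k - 2*x - 6) * x^k
            / ((2*real k - 1) * real (3*k choose k)))
           = -2*x + 2*(real n + 1) * x^(n+1) / real (3*n choose n))
    \<and> ((\<Sum>k=1..n. ((4*x-27)*real k^2 + (27-2*x)*real k - 6) * x^k
            / (real k * (2*real k - 1) * real (3*k choose k)))
           = -2*x + 2 * x^(n+1) / real (3*n choose n))
    \<and> ((\<Sum>k=1..n. (2*(x-16)*real k^2 + (x+32)*real k - x - 6) * x^k
            / ((2*real k - 1) * real (4*k choose (2*k))))
           = -x + (real n + 1) * x^(n+1) / real (4*n choose (2*n)))
    \<and> ((\<Sum>k=1..n. (2*(x-16)*real k^2 + (32-x)*real k - 6) * x^k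
            / (real k * (2*real k - 1) * real (4*k choose (2*k))))
           = -x + x^(n+1) / real (4*n choose (2*n)))
    \<and> ((\<Sum>k=1..n. ((4*x-27)*real k^2 + (6*x+27)*real k + 2*x - 6) * x^k
            / real (3*k choose k))
           = -2*x + 2*(real n + 1)*(2*real n + 1) * x^(n+1) / real (3*n choose n))
    \<and> ((\<Sum>k=1..n. (2*(x-16)*real k^2 + (3*x+32)*real k + x - 6) * x^k
            / real (4*k choose (2*k)))
           = -x + (real n + 1)*(2*real n + 1) * x^(n+1) / real (4*n choose (2*n)))"
  using sum_div_odd_mult_binomial_3k sum_div_mult_odd_mult_binomial_3k
    sum_div_odd_mult_binomial_4k sum_div_mult_odd_mult_binomial_4k
    sum_div_binomial_3k sum_div_binomial_4k
  by blast

end
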